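(* Every bipartite TRVG with respect to the torus on $n$ vertices has at most $2n$ edges. Moreover, this bound is best possible for $n\ge 8$: for every $n\ge 8$ there exists a bipartite TRVG with respect to the torus on $n$ vertices with exactly $2n$ edges.
   Context: View the torus as an axis-parallel rectangle $[0,W]\times[0,H]$ with opposite sides identified. Horizontal lines $y=c$ and vertical lines $x=c$ are then closed curves on the torus. A graph $G$ is a TRVG with respect to the torus if its vertices can be represented by a collection of pairwise non-overlapping axis-parallel rectangles on this torus (a rectangle may wrap across the identified sides), one per vertex, such that two distinct vertices are adjacent if and only if some horizontal or vertical line of the torus intersects the interiors of both of their rectangles (other rectangles do not block visibility). *)

theory Defs
  imports Complex_Main
begin

text \<open>The torus is the rectangle [0,W] x [0,H] with opposite sides identified; we model
  subsets of the torus as subsets of the plane that are periodic with periods W and H.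
  A rectangle on the torus is given by (a, l, b, m): it is the image of the closed
  rectangle [a, a+l] x [b, b+m] (with 0 < l < W, 0 < m < H, so it may wrap across the
  identified sides).\<close>

type_synonym rect = "real \<times> real \<times> real \<times> real"

definition rect_interior :: "real \<Rightarrow> real \<Rightarrow> rect \<Rightarrow> (real \<times> real) set" where
  "rect_interior W H r = (case r of (a, l, b, m) \<Rightarrow>
     {(x, y). \<exists>i j :: int. a < x - of_int i * W \<and> x - of_int i * W < a + l
                        \<and> b < y - of_int j * H \<and> y - of_int j * H < b + m})"

definition valid_rect :: "real \<Rightarrow> real \<Rightarrow> rect \<Rightarrow> bool" where
  "valid_rect W H r = (case r of (a, l, b, m) \<Rightarrow> 0 < l \<and> l < W \<and> 0 < m \<and> m < H)"

definition hline :: "real \<Rightarrow> real \<Rightarrow> (real \<times> real) set" where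
  "hline H c = {(x, y). \<exists>j :: int. y = c + of_int j * H}"

definition vline :: "real \<Rightarrow> real \<Rightarrow> (real \<times> real) set" where
  "vline W c = {(x, y). \<exists>i :: int. x = c + of_int i * W}"

definition simple_graph :: "'a set \<Rightarrow> ('a \<Rightarrow> 'a \<Rightarrow> bool) \<Rightarrow> bool" where
  "simple_graph V E = (finite V \<and> (\<forall>u v. E u v \<longrightarrow> u \<in> V \<and> v \<in> V \<and> u \<noteq> v \<and> E v u))"

definition edges :: "'a set \<Rightarrow> ('a \<Rightarrow> 'a \<Rightarrow> bool) \<Rightarrow> 'a set set" where
  "edges V E = {{u, v} | u v. u \<in> V \<and> v \<in> V \<and> E u v}"

definition bipartite :: "'a set \<Rightarrow> ('a \<Rightarrow> 'a \<Rightarrow> bool) \<Rightarrow> bool" where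
  "bipartite V E = (\<exists>A. A \<subseteq> V \<and> (\<forall>u\<in>V. \<forall>v\<in>V. E u v \<longrightarrow> (u \<in> A \<longleftrightarrow> v \<notin> A)))"

definition torus_rvg :: "'a set \<Rightarrow> ('a \<Rightarrow> 'a \<Rightarrow> bool) \<Rightarrow> bool" where
  "torus_rvg V E = (\<exists>(W::real) (H::real) (R :: 'a \<Rightarrow> rect).
      0 < W \<and> 0 < H \<and>
      (\<forall>v\<in>V. valid_rect W H (R v)) \<and>
      (\<forall>u\<in>V. \<forall>v\<in>V. u \<noteq> v \<longrightarrow> rect_interior W H (R u) \<inter> rect_interior W H (R v) = {}) \<and>
      (\<forall>u\<in>V. \<forall>v\<in>V. u \<noteq> v \<longrightarrow>
         (E u v \<longleftrightarrow>
           (\<exists>c. (hline H c \<inter> rect_interior W H (R u) \<noteq> {} \<and> hline H c \<inter> rect_interior W H (R v) \<noteq> {})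
              \<or> (vline W c \<inter> rect_interior W H (R u) \<noteq> {} \<and> vline W c \<inter> rect_interior W H (R v) \<noteq> {})))))"

end

theory Submission
  imports Defs
begin

text \<open>Project every rectangle to the two coordinate circles \<open>\<real>/W\<int>\<close> and \<open>\<real>/H\<int>\<close>. Two
  rectangles see each other iff their projections overlap on one of the circles, and a
  bipartite graph has no triangles, so it suffices that a triangle-free family of \<open>n\<close> arcs
  on a circle has at most \<open>n\<close> overlapping pairs. For this, charge each overlapping pair to
  the arc whose starting point lies in the other arc: an arc charged twice would start inside
  two further arcs, and just after its starting point all three arcs meet.
  The bound is attained by \<open>K\<^sub>4\<^sub>,\<^sub>4\<close> together with \<open>n - 8\<close> further vertices adjacent to
  two vertices of the same side.\<close>

definition circle_arc :: "real \<Rightarrow> real \<Rightarrow> real \<Rightarrow> real set" where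
  "circle_arc W a l = {x. \<exists>i::int. a < x - of_int i * W \<and> x - of_int i * W < a + l}"

definition half_open_arc :: "real \<Rightarrow> real \<Rightarrow> real \<Rightarrow> real set" where
  "half_open_arc W a l = {x. \<exists>i::int. a \<le> x - of_int i * W \<and> x - of_int i * W < a + l}"

definition arcs_meet :: "real \<Rightarrow> real \<Rightarrow> real \<Rightarrow> real \<Rightarrow> real \<Rightarrow> bool" where
  "arcs_meet W a l b m \<longleftrightarrow> circle_arc W a l \<inter> circle_arc W b m \<noteq> {}"

lemma circle_arc_shift:
  assumes "x \<in> circle_arc W a l"
  shows "x - of_int k * W \<in> circle_arc W a l"
proof -
  obtain i :: int where "a < x - of_int i * W" "x - of_int i * W < a + l"
    using assms unfolding circle_arc_def by auto
  then have "a < (x - of_int k * W) - of_int (i - k) * W \<and> (x - of_int k * W) - of_int (i - k) * W < a + l"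
    by (simp add: left_diff_distrib)
  then show ?thesis unfolding circle_arc_def by blast
qed

lemma circle_arc_offset: "0 < t \<Longrightarrow> t < l \<Longrightarrow> a + t \<in> circle_arc W a l"
  unfolding circle_arc_def by (intro CollectI exI[of _ 0]) auto

lemma circle_arc_nonempty: "0 < l \<Longrightarrow> circle_arc W a l \<noteq> {}"
  using circle_arc_offset[of "l/2" l a W] by auto

lemma arcs_meet_start_in_other:
  assumes "arcs_meet W a l b m"
  shows "a \<in> half_open_arc W b m \<or> b \<in> half_open_arc W a l"
proof -
  obtain c i j where i: "a < c - of_int i * W" "c - of_int i * W < a + l"
    and j: "b < c - of_int j * W" "c - of_int j * W < b + m"
    using assms unfolding arcs_meet_def circle_arc_def by auto
  show ?thesis
  proof (cases "c - of_int i * W - a \<le> c - of_int j * W - b")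
    case True
    then have "b \<le> a - of_int (j - i) * W \<and> a - of_int (j - i) * W < b + m"
      using i j by (simp add: left_diff_distrib)
    then show ?thesis unfolding half_open_arc_def by blast
  next
    case False
    then have "a \<le> b - of_int (i - j) * W \<and> b - of_int (i - j) * W < a + l"
      using i j by (simp add: left_diff_distrib)
    then show ?thesis unfolding half_open_arc_def by blast
  qed
qed

lemma half_open_arc_right_nbhd:
  assumes "x \<in> half_open_arc W a l"
  obtains e where "0 < e" "\<And>t. 0 < t \<Longrightarrow> t < e \<Longrightarrow> x + t \<in> circle_arc W a l"
proof -
  obtain i :: int where i: "a \<le> x - of_int i * W" "x - of_int i * W < a + l"
    using assms unfolding half_open_arc_def by auto
  show ?thesis
  proof
    show "0 < a + l - (x - of_int i * W)" using i by simp
    show "x + t \<in> circle_arc W a l" if "0 < t" "t < a + l - (x - of_int i * W)" for t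
      unfolding circle_arc_def using i that by (intro CollectI exI[of _ i]) auto
  qed
qed

lemma half_open_arcs_common_point:
  assumes "x \<in> half_open_arc W a l" "x \<in> half_open_arc W b m" "0 < k"
  shows "circle_arc W x k \<inter> circle_arc W a l \<inter> circle_arc W b m \<noteq> {}"
proof -
  obtain e1 where "0 < e1" and e1: "\<And>t. 0 < t \<Longrightarrow> t < e1 \<Longrightarrow> x + t \<in> circle_arc W a l"
    using half_open_arc_right_nbhd[OF assms(1)] by blast
  obtain e2 where "0 < e2" and e2: "\<And>t. 0 < t \<Longrightarrow> t < e2 \<Longrightarrow> x + t \<in> circle_arc W b m"
    using half_open_arc_right_nbhd[OF assms(2)] by blast
  define t where "t = min k (min e1 e2) / 2"
  have "0 < t" "t < k" "t < e1" "t < e2"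
    using \<open>0 < e1\<close> \<open>0 < e2\<close> \<open>0 < k\<close> by (auto simp: t_def)
  then have "x + t \<in> circle_arc W x k \<inter> circle_arc W a l \<inter> circle_arc W b m"
    using circle_arc_offset e1 e2 by blast
  then show ?thesis by blast
qed

lemma card_meeting_arc_pairs_le:
  fixes V :: "'a set" and a l :: "'a \<Rightarrow> real"
  assumes "finite V" and "\<And>v. v \<in> V \<Longrightarrow> 0 < l v"
    and triangle_free: "\<And>u v w. u \<in> V \<Longrightarrow> v \<in> V \<Longrightarrow> w \<in> V \<Longrightarrow> u \<noteq> v \<Longrightarrow> v \<noteq> w \<Longrightarrow> u \<noteq> w
      \<Longrightarrow> arcs_meet W (a u) (l u) (a v) (l v) \<Longrightarrow> arcs_meet W (a v) (l v) (a w) (l w)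
      \<Longrightarrow> arcs_meet W (a u) (l u) (a w) (l w) \<Longrightarrow> False"
  shows "card {{u, v} | u v. u \<in> V \<and> v \<in> V \<and> u \<noteq> v \<and> arcs_meet W (a u) (l u) (a v) (l v)} \<le> card V"
proof -
  define charged where
    "charged w = {{w, z} | z. z \<in> V \<and> z \<noteq> w \<and> a w \<in> half_open_arc W (a z) (l z)}" for w
  have fin: "finite (charged w)" for w
    by (rule finite_subset[of _ "(\<lambda>z. {w, z}) ` V"]) (use \<open>finite V\<close> in \<open>auto simp: charged_def\<close>)
  have "card (charged w) \<le> 1" if "w \<in> V" for w
  proof -
    have "z1 = z2" if "z1 \<in> V" "z1 \<noteq> w" "a w \<in> half_open_arc W (a z1) (l z1)"
      and "z2 \<in> V" "z2 \<noteq> w" "a w \<in> half_open_arc W (a z2) (l z2)" for z1 z2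
    proof (rule ccontr)
      assume "z1 \<noteq> z2"
      have "circle_arc W (a w) (l w) \<inter> circle_arc W (a z1) (l z1) \<inter> circle_arc W (a z2) (l z2) \<noteq> {}"
        using half_open_arcs_common_point that assms(2)[OF \<open>w \<in> V\<close>] by blast
      then show False
        using triangle_free[of w z1 z2] that \<open>w \<in> V\<close> \<open>z1 \<noteq> z2\<close> unfolding arcs_meet_def by blast
    qed
    then show ?thesis
      unfolding One_nat_def card_le_Suc0_iff_eq[OF fin] by (auto simp: charged_def)
  qed
  then have "(\<Sum>w\<in>V. card (charged w)) \<le> card V"
    using sum_bounded_above[of V "\<lambda>w. card (charged w)" 1] by simp
  moreover have "{{u, v} | u v. u \<in> V \<and> v \<in> V \<and> u \<noteq> v \<and> arcs_meet W (a u) (l u) (a v) (l v)}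
      \<subseteq> (\<Union>w\<in>V. charged w)"
    using arcs_meet_start_in_other unfolding charged_def by (fastforce simp: insert_commute)
  then have "card {{u, v} | u v. u \<in> V \<and> v \<in> V \<and> u \<noteq> v \<and> arcs_meet W (a u) (l u) (a v) (l v)}
      \<le> card (\<Union>w\<in>V. charged w)"
    using fin \<open>finite V\<close> by (intro card_mono) auto
  ultimately show ?thesis
    using card_UN_le[OF \<open>finite V\<close>, of charged] fin by linarith
qed

lemma rect_interior_eq_arcs:
  "rect_interior W H (a, l, b, m) = circle_arc W a l \<times> circle_arc H b m"
  unfolding rect_interior_def circle_arc_def by auto

lemma vline_meets_iff:
  assumes "Q \<noteq> {}"
  shows "vline W c \<inter> (circle_arc W a l \<times> Q) \<noteq> {} \<longleftrightarrow> c \<in> circle_arc W a l"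
proof
  assume "vline W c \<inter> (circle_arc W a l \<times> Q) \<noteq> {}"
  then obtain i where "c + of_int i * W \<in> circle_arc W a l" unfolding vline_def by auto
  then show "c \<in> circle_arc W a l" using circle_arc_shift[of "c + of_int i * W" W a l i] by simp
next
  assume "c \<in> circle_arc W a l"
  moreover obtain y where "y \<in> Q" using assms by auto
  ultimately have "(c, y) \<in> vline W c \<inter> (circle_arc W a l \<times> Q)"
    unfolding vline_def by (auto intro: exI[of _ 0])
  then show "vline W c \<inter> (circle_arc W a l \<times> Q) \<noteq> {}" by blast
qed

lemma hline_meets_iff:
  assumes "Q \<noteq> {}"
  shows "hline H c \<inter> (Q \<times> circle_arc H b m) \<noteq> {} \<longleftrightarrow> c \<in> circle_arc H b m"
proof
  assume "hline H c \<inter> (Q \<times> circle_arc H b m) \<noteq> {}"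
  then obtain j where "c + of_int j * H \<in> circle_arc H b m" unfolding hline_def by auto
  then show "c \<in> circle_arc H b m" using circle_arc_shift[of "c + of_int j * H" H b m j] by simp
next
  assume "c \<in> circle_arc H b m"
  moreover obtain x where "x \<in> Q" using assms by auto
  ultimately have "(x, c) \<in> hline H c \<inter> (Q \<times> circle_arc H b m)"
    unfolding hline_def by (auto intro: exI[of _ 0])
  then show "hline H c \<inter> (Q \<times> circle_arc H b m) \<noteq> {}" by blast
qed

lemma line_sees_both_iff_arcs_meet:
  assumes "0 < l1" "0 < m1" "0 < l2" "0 < m2"
  shows "(\<exists>c. (hline H c \<inter> rect_interior W H (a1, l1, b1, m1) \<noteq> {}
                \<and> hline H c \<inter> rect_interior W H (a2, l2, b2, m2) \<noteq> {})
            \<or> (vline W c \<inter> rect_interior W H (a1, l1, b1, m1) \<noteq> {}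
                \<and> vline W c \<inter> rect_interior W H (a2, l2, b2, m2) \<noteq> {}))
     \<longleftrightarrow> arcs_meet H b1 m1 b2 m2 \<or> arcs_meet W a1 l1 a2 l2"
  using hline_meets_iff[OF circle_arc_nonempty, OF assms(1)] hline_meets_iff[OF circle_arc_nonempty, OF assms(3)]
    vline_meets_iff[OF circle_arc_nonempty, OF assms(2)] vline_meets_iff[OF circle_arc_nonempty, OF assms(4)]
  unfolding rect_interior_eq_arcs arcs_meet_def by (simp add: ex_disj_distrib disjoint_iff)

lemma bipartite_triangle_free:
  assumes "bipartite V E" "u \<in> V" "v \<in> V" "w \<in> V" "E u v" "E v w" "E u w"
  shows False
  using assms unfolding bipartite_def by metis

lemma bipartite_card_meeting_arc_pairs_le:
  fixes V :: "'a set" and a l :: "'a \<Rightarrow> real"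
  assumes "finite V" "bipartite V E" "\<And>v. v \<in> V \<Longrightarrow> 0 < l v"
    and "\<And>u v. u \<in> V \<Longrightarrow> v \<in> V \<Longrightarrow> u \<noteq> v \<Longrightarrow> arcs_meet W (a u) (l u) (a v) (l v) \<Longrightarrow> E u v"
  shows "card {{u, v} | u v. u \<in> V \<and> v \<in> V \<and> u \<noteq> v \<and> arcs_meet W (a u) (l u) (a v) (l v)} \<le> card V"
proof (rule card_meeting_arc_pairs_le[OF assms(1,3)])
  fix u v w assume "u \<in> V" "v \<in> V" "w \<in> V" "u \<noteq> v" "v \<noteq> w" "u \<noteq> w"
    and "arcs_meet W (a u) (l u) (a v) (l v)" "arcs_meet W (a v) (l v) (a w) (l w)"
      "arcs_meet W (a u) (l u) (a w) (l w)"
  then have "E u v" "E v w" "E u w" using assms(4) by blast+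
  then show False using bipartite_triangle_free[OF assms(2)] \<open>u \<in> V\<close> \<open>v \<in> V\<close> \<open>w \<in> V\<close> by blast
qed

lemma torus_rvg_bipartite_card_edges_le:
  fixes V :: "'a set"
  assumes "simple_graph V E" "bipartite V E" "torus_rvg V E"
  shows "card (edges V E) \<le> 2 * card V"
proof -
  obtain W H and R :: "'a \<Rightarrow> rect" where "\<forall>v\<in>V. valid_rect W H (R v)"
    and visible: "\<forall>u\<in>V. \<forall>v\<in>V. u \<noteq> v \<longrightarrow> (E u v \<longleftrightarrow>
      (\<exists>c. (hline H c \<inter> rect_interior W H (R u) \<noteq> {} \<and> hline H c \<inter> rect_interior W H (R v) \<noteq> {})
         \<or> (vline W c \<inter> rect_interior W H (R u) \<noteq> {} \<and> vline W c \<inter> rect_interior W H (R v) \<noteq> {})))"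
    using assms(3) unfolding torus_rvg_def by (elim exE conjE) (rule that; assumption)
  define a where "a v = fst (R v)" for v
  define l where "l v = fst (snd (R v))" for v
  define b where "b v = fst (snd (snd (R v)))" for v
  define m where "m v = snd (snd (snd (R v)))" for v
  have R: "R v = (a v, l v, b v, m v)" for v unfolding a_def l_def b_def m_def by simp
  have pos: "0 < l v" "0 < m v" if "v \<in> V" for v
    using \<open>\<forall>v\<in>V. valid_rect W H (R v)\<close> that R[of v] unfolding valid_rect_def by auto
  have E_iff: "E u v \<longleftrightarrow> arcs_meet H (b u) (m u) (b v) (m v) \<or> arcs_meet W (a u) (l u) (a v) (l v)"
    if "u \<in> V" "v \<in> V" "u \<noteq> v" for u v
    using visible that line_sees_both_iff_arcs_meet[OF pos(1,2)[OF that(1)] pos(1,2)[OF that(2)]]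
    unfolding R by simp
  have "finite V" using assms(1) unfolding simple_graph_def by blast
  define Sx where "Sx = {{u, v} | u v. u \<in> V \<and> v \<in> V \<and> u \<noteq> v \<and> arcs_meet W (a u) (l u) (a v) (l v)}"
  define Sy where "Sy = {{u, v} | u v. u \<in> V \<and> v \<in> V \<and> u \<noteq> v \<and> arcs_meet H (b u) (m u) (b v) (m v)}"
  have "card Sx \<le> card V" unfolding Sx_def
    by (rule bipartite_card_meeting_arc_pairs_le[OF \<open>finite V\<close> assms(2) pos(1)]) (simp_all add: E_iff)
  have "card Sy \<le> card V" unfolding Sy_def
    by (rule bipartite_card_meeting_arc_pairs_le[OF \<open>finite V\<close> assms(2) pos(2)]) (simp_all add: E_iff)
  have "edges V E \<subseteq> Sx \<union> Sy"
  proof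
    fix e assume "e \<in> edges V E"
    then obtain u v where "e = {u, v}" "u \<in> V" "v \<in> V" "E u v" unfolding edges_def by blast
    moreover from this have "u \<noteq> v" using assms(1) unfolding simple_graph_def by blast
    ultimately show "e \<in> Sx \<union> Sy" using E_iff unfolding Sx_def Sy_def by blast
  qed
  moreover have "finite (Sx \<union> Sy)"
    by (rule finite_subset[of _ "Pow V"]) (use \<open>finite V\<close> in \<open>auto simp: Sx_def Sy_def\<close>)
  ultimately have "card (edges V E) \<le> card Sx + card Sy"
    by (meson card_Un_le card_mono le_trans)
  with \<open>card Sx \<le> card V\<close> \<open>card Sy \<le> card V\<close> show ?thesis by linarith
qed

text \<open>For arcs starting in [0, W) and shorter than W, only the translates by 0 and \<open>\<plusminus>W\<close>
  can overlap.\<close>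

definition overlap_mod :: "real \<Rightarrow> real \<Rightarrow> real \<Rightarrow> real \<Rightarrow> real \<Rightarrow> bool" where
  "overlap_mod W a l b m \<longleftrightarrow>
     (a < b + m \<and> b < a + l) \<or> (a < b + W + m \<and> b + W < a + l) \<or> (a < b - W + m \<and> b - W < a + l)"

lemma overlap_mod_sym: "overlap_mod W a l b m \<longleftrightarrow> overlap_mod W b m a l"
  unfolding overlap_mod_def by auto

lemma arcs_meet_iff_overlap_mod:
  assumes "0 \<le> a" "a < W" "0 \<le> b" "b < W" "0 < l" "l < W" "0 < m" "m < W"
  shows "arcs_meet W a l b m \<longleftrightarrow> overlap_mod W a l b m"
proof
  assume "arcs_meet W a l b m"
  then obtain c i j where i: "a < c - of_int i * W" "c - of_int i * W < a + l"
    and j: "b < c - of_int j * W" "c - of_int j * W < b + m"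
    unfolding arcs_meet_def circle_arc_def by auto
  define k where "k = j - i"
  have k: "a < b + of_int k * W + m" "b + of_int k * W < a + l"
    using i j unfolding k_def by (simp_all add: left_diff_distrib)
  have "0 < W" using assms by linarith
  have "(-2) * W < of_int k * W" "of_int k * W < 2 * W"
    using k assms by linarith+
  then have "real_of_int (-2) < of_int k" "real_of_int k < of_int 2"
    using mult_less_cancel_right_pos[OF \<open>0 < W\<close>] by (simp_all del: mult_minus_left)
  then have "-2 < k" "k < 2" by linarith+
  then have "k = -1 \<or> k = 0 \<or> k = 1" by arith
  then show "overlap_mod W a l b m" using k unfolding overlap_mod_def by auto
next
  assume "overlap_mod W a l b m"
  then have "\<exists>k::int. a < b + of_int k * W + m \<and> b + of_int k * W < a + l"
    unfolding overlap_mod_def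
    by (elim disjE) (rule exI[of _ 0], simp, rule exI[of _ 1], simp, rule exI[of _ "-1"], simp)
  then obtain k :: int where k: "a < b + of_int k * W + m" "b + of_int k * W < a + l"
    by blast
  define b' where "b' = b + of_int k * W"
  define c where "c = (max a b' + min (a + l) (b' + m)) / 2"
  have "a < b' + m" "b' < a + l"
    using k unfolding b'_def by simp_all
  then have "a < c \<and> c < a + l" "b' < c \<and> c < b' + m"
    using assms unfolding c_def by (auto simp: min_def max_def)
  then have "c \<in> circle_arc W a l" "c \<in> circle_arc W b m"
    unfolding circle_arc_def b'_def by (auto intro: exI[of _ 0] exI[of _ k])
  then show "arcs_meet W a l b m" unfolding arcs_meet_def by blast
qed

text \<open>The witness lives on the square torus of side \<open>32 + 2T\<close>, \<open>T = n - 8\<close>. For \<open>T = 0\<close>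
  the core vertices \<open>v < 8\<close> are the \<open>6 \<times> 6\<close> squares at \<open>(4v, 4\<pi>(v))\<close> with
  \<open>\<pi> = [0,3,6,1,4,7,2,5]\<close>, which realise \<open>K\<^sub>4\<^sub>,\<^sub>4\<close> between even and odd vertices. In general
  square 0 is stretched by \<open>2T\<close> horizontally and square 2 by \<open>2T\<close> vertically, and vertex
  \<open>8 + j\<close> is the unit square at \<open>(3 + 2j, 27 + 2j)\<close> inside both stretched parts, so it sees
  exactly the vertices 0 and 2.\<close>

definition x_start :: "real \<Rightarrow> nat \<Rightarrow> real" where
  "x_start T v = (if v = 0 then 0 else if v < 8 then 4 * real v + 2 * T else 3 + 2 * real (v - 8))"

definition x_len :: "real \<Rightarrow> nat \<Rightarrow> real" where
  "x_len T v = (if v = 0 then 6 + 2 * T else if v < 8 then 6 else 1)"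

definition y_start :: "real \<Rightarrow> nat \<Rightarrow> real" where
  "y_start T v = (if v = 5 then 28 + 2 * T
     else if v < 8 then 4 * real ([0, 3, 6, 1, 4, 7, 2, 5] ! v) else 27 + 2 * real (v - 8))"

definition y_len :: "real \<Rightarrow> nat \<Rightarrow> real" where
  "y_len T v = (if v = 2 then 6 + 2 * T else if v < 8 then 6 else 1)"

definition x_overlap :: "real \<Rightarrow> nat \<Rightarrow> nat \<Rightarrow> bool" where
  "x_overlap T u v \<longleftrightarrow> overlap_mod (32 + 2 * T) (x_start T u) (x_len T u) (x_start T v) (x_len T v)"

definition y_overlap :: "real \<Rightarrow> nat \<Rightarrow> nat \<Rightarrow> bool" where
  "y_overlap T u v \<longleftrightarrow> overlap_mod (32 + 2 * T) (y_start T u) (y_len T u) (y_start T v) (y_len T v)"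

definition extremal_graph :: "nat \<Rightarrow> nat \<Rightarrow> nat \<Rightarrow> bool" where
  "extremal_graph n u v \<longleftrightarrow> u < n \<and> v < n \<and> u \<noteq> v \<and>
     ((u < 8 \<and> v < 8 \<and> odd (u + v)) \<or> (8 \<le> u \<and> (v = 0 \<or> v = 2)) \<or> (8 \<le> v \<and> (u = 0 \<or> u = 2)))"

lemma less_8_cases: "(v::nat) < 8 \<Longrightarrow> v = 0 \<or> v = 1 \<or> v = 2 \<or> v = 3 \<or> v = 4 \<or> v = 5 \<or> v = 6 \<or> v = 7"
  by arith

lemma x_overlap_sym: "x_overlap T u v \<longleftrightarrow> x_overlap T v u"
  unfolding x_overlap_def using overlap_mod_sym by blast

lemma y_overlap_sym: "y_overlap T u v \<longleftrightarrow> y_overlap T v u"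
  unfolding y_overlap_def using overlap_mod_sym by blast

lemma core_overlap:
  assumes "u < 8" "v < 8" "u \<noteq> v" "0 \<le> T"
  shows "\<not> (x_overlap T u v \<and> y_overlap T u v) \<and> (x_overlap T u v \<or> y_overlap T u v \<longleftrightarrow> odd (u + v))"
  using less_8_cases[OF assms(1)] less_8_cases[OF assms(2)] assms(3,4)
  by (elim disjE)
    (simp_all add: x_overlap_def y_overlap_def overlap_mod_def x_start_def x_len_def y_start_def y_len_def)

lemma pendant_core_overlap:
  assumes "8 \<le> u" "real (u - 8) + 1 \<le> T" "v < 8"
  shows "(x_overlap T u v \<longleftrightarrow> v = 0) \<and> (y_overlap T u v \<longleftrightarrow> v = 2)"
proof -
  define j where "j = real (u - 8)"
  have "0 \<le> j" "j + 1 \<le> T" using assms(2) unfolding j_def by simp_all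
  moreover have "x_start T u = 3 + 2 * j" "x_len T u = 1" "y_start T u = 27 + 2 * j" "y_len T u = 1"
    using assms(1) unfolding j_def x_start_def x_len_def y_start_def y_len_def by simp_all
  ultimately show ?thesis
    using less_8_cases[OF assms(3)] unfolding x_overlap_def y_overlap_def
    by (elim disjE) (auto simp: overlap_mod_def x_start_def x_len_def y_start_def y_len_def)
qed

lemma pendant_pendant_no_overlap:
  assumes "8 \<le> u" "8 \<le> v" "u \<noteq> v" "real (u - 8) + 1 \<le> T" "real (v - 8) + 1 \<le> T"
  shows "\<not> x_overlap T u v \<and> \<not> y_overlap T u v"
proof -
  have "real (u - 8) + 1 \<le> real (v - 8) \<or> real (v - 8) + 1 \<le> real (u - 8)"
    using assms(1-3) by linarith
  then show ?thesis
    using assms unfolding x_overlap_def y_overlap_def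
    by (auto simp: overlap_mod_def x_start_def x_len_def y_start_def y_len_def)
qed

lemma overlap_iff_extremal_graph:
  assumes "u < n" "v < n" "u \<noteq> v" "T = real (n - 8)"
  shows "\<not> (x_overlap T u v \<and> y_overlap T u v)
    \<and> (x_overlap T u v \<or> y_overlap T u v \<longleftrightarrow> extremal_graph n u v)"
proof -
  have pendant_bound: "real (w - 8) + 1 \<le> T" if "w < n" "8 \<le> w" for w
    using assms(4) that by linarith
  consider "u < 8" "v < 8" | "8 \<le> u" "v < 8" | "u < 8" "8 \<le> v" | "8 \<le> u" "8 \<le> v"
    by linarith
  then show ?thesis
  proof cases
    case 1
    then show ?thesis using core_overlap[OF 1 assms(3)] assms unfolding extremal_graph_def by simp
  next
    case 2
    then show ?thesis
      using pendant_core_overlap[OF 2(1) pendant_bound[OF assms(1) 2(1)] 2(2)] assms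
      unfolding extremal_graph_def by auto
  next
    case 3
    then show ?thesis
      using pendant_core_overlap[OF 3(2) pendant_bound[OF assms(2) 3(2)] 3(1)] assms
        x_overlap_sym y_overlap_sym
      unfolding extremal_graph_def by auto
  next
    case 4
    then show ?thesis
      using pendant_pendant_no_overlap[OF 4 assms(3) pendant_bound[OF assms(1) 4(1)] pendant_bound[OF assms(2) 4(2)]]
      unfolding extremal_graph_def by auto
  qed
qed

lemma coordinates_in_range:
  assumes "v < n" "8 \<le> n" "T = real (n - 8)"
  shows "0 \<le> x_start T v \<and> x_start T v < 32 + 2 * T \<and> 0 < x_len T v \<and> x_len T v < 32 + 2 * T \<and>
         0 \<le> y_start T v \<and> y_start T v < 32 + 2 * T \<and> 0 < y_len T v \<and> y_len T v < 32 + 2 * T"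
proof (cases "v < 8")
  case True
  then show ?thesis using less_8_cases[OF True] assms(2,3)
    by (elim disjE) (simp_all add: x_start_def x_len_def y_start_def y_len_def)
next
  case False
  then have "real (v - 8) + 1 \<le> T" using assms by linarith
  then show ?thesis using False by (simp add: x_start_def x_len_def y_start_def y_len_def)
qed

lemma card_edges_eq_card_ordered_pairs:
  fixes V :: "'a::linorder set"
  assumes "simple_graph V E"
  shows "card (edges V E) = card {(u, v). u < v \<and> E u v}"
proof -
  define S where "S = {(u, v). u < v \<and> E u v}"
  have "edges V E = (\<lambda>(u, v). {u, v}) ` S"
  proof (intro equalityI subsetI)
    fix e assume "e \<in> edges V E"
    then obtain u v where "e = {u, v}" "E u v" unfolding edges_def by blast
    moreover have "u \<noteq> v" "E v u" using assms \<open>E u v\<close> unfolding simple_graph_def by blast+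
    ultimately have "(u, v) \<in> S \<and> e = {u, v} \<or> (v, u) \<in> S \<and> e = {v, u}"
      unfolding S_def by (auto simp: neq_iff insert_commute)
    then show "e \<in> (\<lambda>(u, v). {u, v}) ` S" by force
  next
    fix e assume "e \<in> (\<lambda>(u, v). {u, v}) ` S"
    then obtain u v where "e = {u, v}" "E u v" unfolding S_def by auto
    then show "e \<in> edges V E" using assms unfolding edges_def simple_graph_def by blast
  qed
  moreover have "inj_on (\<lambda>(u, v). {u, v}) S"
    unfolding S_def by (rule inj_onI) (auto simp: doubleton_eq_iff)
  ultimately show ?thesis unfolding S_def by (simp add: card_image)
qed

lemma simple_graph_extremal_graph: "simple_graph {..<n} (extremal_graph n)"
  unfolding simple_graph_def extremal_graph_def by (auto simp: add.commute)

lemma bipartite_extremal_graph: "bipartite {..<n} (extremal_graph n)"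
  unfolding bipartite_def extremal_graph_def
  by (rule exI[of _ "{v. v < n \<and> v < 8 \<and> even v}"]) auto

lemma card_edges_extremal_graph:
  assumes "8 \<le> n"
  shows "card (edges {..<n} (extremal_graph n)) = 2 * n"
proof -
  define core where "core = {(0::nat, 1::nat), (0, 3), (0, 5), (0, 7), (1, 2), (1, 4), (1, 6),
    (2, 3), (2, 5), (2, 7), (3, 4), (3, 6), (4, 5), (4, 7), (5, 6), (6, 7)}"
  define pendant where "pendant w = (\<lambda>j. (w, j)) ` {8..<n}" for w :: nat
  have "{(u, v). u < v \<and> extremal_graph n u v} = core \<union> pendant 0 \<union> pendant 2"
  proof (intro equalityI subsetI)
    fix p assume "p \<in> {(u, v). u < v \<and> extremal_graph n u v}"
    then obtain u v where "p = (u, v)" "u < v" "extremal_graph n u v" by blast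
    show "p \<in> core \<union> pendant 0 \<union> pendant 2"
    proof (cases "v < 8")
      case True
      then have "u < 8" using \<open>u < v\<close> by simp
      then show ?thesis
        using less_8_cases[OF True] less_8_cases[OF \<open>u < 8\<close>] \<open>p = (u, v)\<close> \<open>u < v\<close> \<open>extremal_graph n u v\<close>
        unfolding core_def extremal_graph_def by (elim disjE) simp_all
    next
      case False
      then show ?thesis
        using \<open>p = (u, v)\<close> \<open>u < v\<close> \<open>extremal_graph n u v\<close> unfolding pendant_def extremal_graph_def by auto
    qed
  qed (use assms in \<open>auto simp: core_def pendant_def extremal_graph_def\<close>)
  moreover have "card (pendant w) = n - 8" for w
    unfolding pendant_def by (subst card_image) (auto simp: inj_on_def)
  moreover have "card core = 16" "finite core" "finite (pendant w)" for w
    unfolding core_def pendant_def by auto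
  moreover have "core \<inter> pendant 0 = {}" "(core \<union> pendant 0) \<inter> pendant 2 = {}"
    unfolding core_def pendant_def by auto
  ultimately have "card {(u, v). u < v \<and> extremal_graph n u v} = 16 + (n - 8) + (n - 8)"
    by (simp add: card_Un_disjoint)
  then show ?thesis
    using assms card_edges_eq_card_ordered_pairs[OF simple_graph_extremal_graph] by simp
qed

lemma extremal_graph_torus_rvg:
  assumes "8 \<le> n"
  shows "torus_rvg {..<n} (extremal_graph n)"
proof -
  define T where "T = real (n - 8)"
  define W where "W = 32 + 2 * T"
  define R where "R v = (x_start T v, x_len T v, y_start T v, y_len T v)" for v
  have range: "0 \<le> x_start T v \<and> x_start T v < W \<and> 0 < x_len T v \<and> x_len T v < W \<and>
      0 \<le> y_start T v \<and> y_start T v < W \<and> 0 < y_len T v \<and> y_len T v < W" if "v < n" for v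
    using coordinates_in_range[OF that assms T_def] unfolding W_def .
  have x_meet: "arcs_meet W (x_start T u) (x_len T u) (x_start T v) (x_len T v) \<longleftrightarrow> x_overlap T u v"
    and y_meet: "arcs_meet W (y_start T u) (y_len T u) (y_start T v) (y_len T v) \<longleftrightarrow> y_overlap T u v"
    if "u < n" "v < n" for u v
    using range[OF that(1)] range[OF that(2)]
    unfolding x_overlap_def y_overlap_def W_def[symmetric] by (simp_all add: arcs_meet_iff_overlap_mod)
  show ?thesis unfolding torus_rvg_def
  proof (intro exI[of _ W] exI[of _ W] exI[of _ R] conjI ballI impI)
    show "0 < W" using range[of 0] assms by linarith
    then show "0 < W" .
    show "valid_rect W W (R v)" if "v \<in> {..<n}" for v
      using range[of v] that unfolding valid_rect_def R_def by auto
    fix u v assume uv: "u \<in> {..<n}" "v \<in> {..<n}" "u \<noteq> v"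
    then have overlap: "\<not> (x_overlap T u v \<and> y_overlap T u v)
        \<and> (x_overlap T u v \<or> y_overlap T u v \<longleftrightarrow> extremal_graph n u v)"
      using overlap_iff_extremal_graph T_def by simp
    show "rect_interior W W (R u) \<inter> rect_interior W W (R v) = {}"
      using overlap x_meet[of u v] y_meet[of u v] uv
      unfolding R_def rect_interior_eq_arcs arcs_meet_def by auto
    show "extremal_graph n u v \<longleftrightarrow>
      (\<exists>c. (hline W c \<inter> rect_interior W W (R u) \<noteq> {} \<and> hline W c \<inter> rect_interior W W (R v) \<noteq> {})
         \<or> (vline W c \<inter> rect_interior W W (R u) \<noteq> {} \<and> vline W c \<inter> rect_interior W W (R v) \<noteq> {}))"
      using overlap x_meet[of u v] y_meet[of u v] uv range[of u] range[of v]
      unfolding R_def by (subst line_sees_both_iff_arcs_meet) auto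
  qed
qed

theorem theorem4:
  shows "(\<forall>(V :: 'a set) E. simple_graph V E \<and> bipartite V E \<and> torus_rvg V E
            \<longrightarrow> card (edges V E) \<le> 2 * card V)
       \<and> (\<forall>n::nat. n \<ge> 8 \<longrightarrow> (\<exists>(V :: nat set) E. simple_graph V E \<and> card V = n \<and>
            bipartite V E \<and> torus_rvg V E \<and> card (edges V E) = 2 * n))"
proof (intro conjI allI impI)
  fix V :: "'a set" and E
  assume "simple_graph V E \<and> bipartite V E \<and> torus_rvg V E"
  then show "card (edges V E) \<le> 2 * card V"
    using torus_rvg_bipartite_card_edges_le by blast
next
  fix n :: nat assume "8 \<le> n"
  then show "\<exists>(V :: nat set) E. simple_graph V E \<and> card V = n \<and>
      bipartite V E \<and> torus_rvg V E \<and> card (edges V E) = 2 * n"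
    using simple_graph_extremal_graph bipartite_extremal_graph extremal_graph_torus_rvg[OF \<open>8 \<le> n\<close>]
      card_edges_extremal_graph[OF \<open>8 \<le> n\<close>] by (intro exI[of _ "{..<n}"] exI[of _ "extremal_graph n"]) simp
qed

end
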